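(* Let $\mathbf{k}$ be an algebraically closed field of characteristic zero and let $\mathbb{H}_4$ be Sweedler's 4-dimensional Hopf algebra, with basis $\{1,g,\nu,g\nu\}$. Then every relaxed weak post-Hopf algebra structure $\rhd$ on $\mathbb{H}_4$ has one of the following forms (in each case $x\rhd 1=\varepsilon(x)1$, i.e. $1\rhd 1=g\rhd 1=1$ and $\nu\rhd 1=g\nu\rhd 1=0$; the remaining values are listed): (i) for some parameter $a\in\mathbf{k}$: $1\rhd g=g$, $1\rhd\nu=\nu$, $1\rhd g\nu=g\nu$; $g\rhd g=g$, $g\rhd\nu=-\nu$, $g\rhd g\nu=-g\nu$; $\nu\rhd g=0$, $\nu\rhd\nu=a\nu$, $\nu\rhd g\nu=ag\nu$; $g\nu\rhd g=0$, $g\nu\rhd\nu=a\nu$, $g\nu\rhd g\nu=ag\nu$. (ii) for some parameter $a\in\mathbf{k}$: $1\rhd g=g$, $1\rhd\nu=\nu$, $1\rhd g\nu=g\nu$; $g\rhd g=1$, $g\rhd\nu=0$, $g\rhd g\nu=0$; $\nu\rhd g=a1-ag$, $\nu\rhd\nu=-a\nu$, $\nu\rhd g\nu=-ag\nu$; $g\nu\rhd g=a1-ag$, $g\nu\rhd\nu=-a\nu$, $g\nu\rhd g\nu=-ag\nu$. (iii) $1\rhd g=g$, $1\rhd\nu=\nu$, $1\rhd g\nu=g\nu$; $g\rhd g=g$, $g\rhd\nu=\nu$, $g\rhd g\nu=g\nu$; and $\nu\rhd y=g\nu\rhd y=0$ for $y\in\{g,\nu,g\nu\}$. (iv) $1\rhd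 g=g$, $g\rhd g=g$, and $x\rhd y=0$ for all $x\in\{1,g,\nu,g\nu\}$, $y\in\{\nu,g\nu\}$, and $\nu\rhd g=g\nu\rhd g=0$. (v) $1\rhd g=g$, $g\rhd g=1$, and $x\rhd y=0$ for all $x\in\{1,g,\nu,g\nu\}$, $y\in\{\nu,g\nu\}$, and $\nu\rhd g=g\nu\rhd g=0$. (vi) $1\rhd g=1$, $g\rhd g=1$, and $x\rhd y=0$ for all $x\in\{1,g,\nu,g\nu\}$, $y\in\{\nu,g\nu\}$, and $\nu\rhd g=g\nu\rhd g=0$.
   Context: Sweedler's 4-dimensional Hopf algebra $\mathbb{H}_4$ is the algebra generated by $g,\nu$ with relations $g^2=1$, $\nu^2=0$, $g\nu+\nu g=0$, with coproduct $\Delta(g)=g\otimes g$, $\Delta(\nu)=g\otimes\nu+\nu\otimes 1$, counit $\varepsilon(g)=1$, $\varepsilon(\nu)=0$, antipode $S(g)=g$, $S(\nu)=-g\nu$. Sweedler notation $\Delta(x)=x_1\otimes x_2$ is used with summation suppressed. A relaxed weak post-Hopf algebra structure on a Hopf algebra $H$ is a linear map $\rhd:H\otimes H\to H$ which is a coalgebra homomorphism, where $H\otimes H$ carries the tensor product coalgebra structure (i.e. $\Delta(x\rhd y)=(x_1\rhd y_1)\otimes(x_2\rhd y_2)$ and $\varepsilon(x\rhd y)=\varepsilon(x)\varepsilon(y)$), satisfying for all $x,y,z\in H$: (1) $x\rhd(yz)=(x_1\rhd y)(x_2\rhd z)$; (2) $x\rhd(y\rhd z)=\big(x_1(x_2\rhd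 y)\big)\rhd z$. (No condition $1\rhd x=x$ is imposed.) The map $\rhd$ is determined by its values $x\rhd y$ on basis elements $x,y\in\{1,g,\nu,g\nu\}$, extended bilinearly. *)

theory Defs
  imports "HOL-Computational_Algebra.Polynomial" "HOL-Library.Function_Algebras"
begin

text \<open>Sweedler's 4-dimensional Hopf algebra H4 over a field 'k, realised as
  coordinate vectors w.r.t. the basis {1, g, nu, g nu}.\<close>

datatype B = One | G | N | GN

lemma UNIV_B: "(UNIV :: B set) = {One, G, N, GN}"
  by (auto intro: B.exhaust)

instance B :: finite
  by standard (simp add: UNIV_B)

type_synonym 'k h4 = "B \<Rightarrow> 'k"
type_synonym 'k h4t = "B \<times> B \<Rightarrow> 'k"

definition vec :: "'k \<Rightarrow> 'k \<Rightarrow> 'k \<Rightarrow> 'k \<Rightarrow> 'k h4" where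
  "vec c1 cg cn cgn = (\<lambda>b. case b of One \<Rightarrow> c1 | G \<Rightarrow> cg | N \<Rightarrow> cn | GN \<Rightarrow> cgn)"

definition bas :: "B \<Rightarrow> 'k::zero_neq_one h4" where
  "bas a = (\<lambda>b. if b = a then 1 else 0)"

text \<open>products of basis elements: g^2 = 1, nu^2 = 0, g nu = - nu g\<close>
fun bmul :: "B \<Rightarrow> B \<Rightarrow> 'k::comm_ring_1 h4" where
  "bmul One b = bas b"
| "bmul a One = bas a"
| "bmul G G = bas One"
| "bmul G N = bas GN"
| "bmul G GN = bas N"
| "bmul N G = - bas GN"
| "bmul N N = 0"
| "bmul N GN = 0"
| "bmul GN G = - bas N"
| "bmul GN N = 0"
| "bmul GN GN = 0"

definition mult :: "'k::comm_ring_1 h4 \<Rightarrow> 'k h4 \<Rightarrow> 'k h4" where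
  "mult u v = (\<lambda>c. \<Sum>a\<in>UNIV. \<Sum>b\<in>UNIV. u a * v b * bmul a b c)"

text \<open>coproduct on basis: Delta 1 = 1@1, Delta g = g@g, Delta nu = g@nu + nu@1,
  Delta(g nu) = 1@g nu + g nu@g\<close>
fun bcop :: "B \<Rightarrow> 'k::comm_ring_1 h4t" where
  "bcop One = (\<lambda>p. if p = (One, One) then 1 else 0)"
| "bcop G = (\<lambda>p. if p = (G, G) then 1 else 0)"
| "bcop N = (\<lambda>p. if p = (G, N) \<or> p = (N, One) then 1 else 0)"
| "bcop GN = (\<lambda>p. if p = (One, GN) \<or> p = (GN, G) then 1 else 0)"

definition cop :: "'k::comm_ring_1 h4 \<Rightarrow> 'k h4t" where
  "cop u = (\<lambda>p. \<Sum>c\<in>UNIV. u c * bcop c p)"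

fun beps :: "B \<Rightarrow> 'k::comm_ring_1" where
  "beps One = 1" | "beps G = 1" | "beps N = 0" | "beps GN = 0"

definition eps :: "'k::comm_ring_1 h4 \<Rightarrow> 'k" where
  "eps u = (\<Sum>c\<in>UNIV. u c * beps c)"

text \<open>A linear map H4 (x) H4 -> H4 is given by its values T a b = e_a |> e_b
  on basis tensors; rhd T extends it bilinearly.\<close>
definition rhd :: "(B \<Rightarrow> B \<Rightarrow> 'k::comm_ring_1 h4) \<Rightarrow> 'k h4 \<Rightarrow> 'k h4 \<Rightarrow> 'k h4" where
  "rhd T u v = (\<lambda>c. \<Sum>a\<in>UNIV. \<Sum>b\<in>UNIV. u a * v b * T a b c)"

definition relaxed_weak_post_hopf :: "(B \<Rightarrow> B \<Rightarrow> 'k::comm_ring_1 h4) \<Rightarrow> bool" where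
  "relaxed_weak_post_hopf T \<longleftrightarrow>
     \<comment> \<open>coalgebra homomorphism H (x) H -> H\<close>
     (\<forall>x y. cop (rhd T x y) =
        (\<lambda>(p, q). \<Sum>a\<in>UNIV. \<Sum>b\<in>UNIV. \<Sum>c\<in>UNIV. \<Sum>d\<in>UNIV.
            cop x (a, b) * cop y (c, d) * rhd T (bas a) (bas c) p * rhd T (bas b) (bas d) q)) \<and>
     (\<forall>x y. eps (rhd T x y) = eps x * eps y) \<and>
     \<comment> \<open>(1) x |> (yz) = (x1 |> y)(x2 |> z)\<close>
     (\<forall>x y z. rhd T x (mult y z) =
        (\<lambda>r. \<Sum>a\<in>UNIV. \<Sum>b\<in>UNIV. cop x (a, b) * mult (rhd T (bas a) y) (rhd T (bas b) z) r)) \<and>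
     \<comment> \<open>(2) x |> (y |> z) = (x1 (x2 |> y)) |> z\<close>
     (\<forall>x y z. rhd T x (rhd T y z) =
        (\<lambda>r. \<Sum>a\<in>UNIV. \<Sum>b\<in>UNIV. cop x (a, b) * rhd T (mult (bas a) (rhd T (bas b) y)) z r))"

fun form_i :: "'k::comm_ring_1 \<Rightarrow> B \<Rightarrow> B \<Rightarrow> 'k h4" where
  "form_i a x One = (if x = One \<or> x = G then bas One else 0)"
| "form_i a One y = bas y"
| "form_i a G G = bas G"
| "form_i a G N = - bas N"
| "form_i a G GN = - bas GN"
| "form_i a N G = 0"
| "form_i a N N = vec 0 0 a 0"
| "form_i a N GN = vec 0 0 0 a"
| "form_i a GN G = 0"
| "form_i a GN N = vec 0 0 a 0"
| "form_i a GN GN = vec 0 0 0 a"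

fun form_ii :: "'k::comm_ring_1 \<Rightarrow> B \<Rightarrow> B \<Rightarrow> 'k h4" where
  "form_ii a x One = (if x = One \<or> x = G then bas One else 0)"
| "form_ii a One y = bas y"
| "form_ii a G G = bas One"
| "form_ii a G N = 0"
| "form_ii a G GN = 0"
| "form_ii a N G = vec a (- a) 0 0"
| "form_ii a N N = vec 0 0 (- a) 0"
| "form_ii a N GN = vec 0 0 0 (- a)"
| "form_ii a GN G = vec a (- a) 0 0"
| "form_ii a GN N = vec 0 0 (- a) 0"
| "form_ii a GN GN = vec 0 0 0 (- a)"

fun form_iii :: "B \<Rightarrow> B \<Rightarrow> 'k::comm_ring_1 h4" where
  "form_iii x One = (if x = One \<or> x = G then bas One else 0)"
| "form_iii One y = bas y"
| "form_iii G y = bas y"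
| "form_iii N y = 0"
| "form_iii GN y = 0"

fun form_iv :: "B \<Rightarrow> B \<Rightarrow> 'k::comm_ring_1 h4" where
  "form_iv x One = (if x = One \<or> x = G then bas One else 0)"
| "form_iv One G = bas G"
| "form_iv G G = bas G"
| "form_iv x y = 0"

fun form_v :: "B \<Rightarrow> B \<Rightarrow> 'k::comm_ring_1 h4" where
  "form_v x One = (if x = One \<or> x = G then bas One else 0)"
| "form_v One G = bas G"
| "form_v G G = bas One"
| "form_v x y = 0"

fun form_vi :: "B \<Rightarrow> B \<Rightarrow> 'k::comm_ring_1 h4" where
  "form_vi x One = (if x = One \<or> x = G then bas One else 0)"
| "form_vi One G = bas One"
| "form_vi G G = bas One"
| "form_vi x y = 0"

end

theory Submission
  imports Defs
begin

(* For a grouplike x \<in> {1, g} we have \<Delta>x = x \<otimes> x, so y \<mapsto> x \<rhd> y is a multiplicative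
   coalgebra map of H4, i.e. a Hopf algebra endomorphism: either y \<mapsto> \<epsilon>(y)1 or the map
   fixing g and sending \<nu> to \<alpha>\<nu>.  Condition (2) for x, y \<in> {1, g} leaves six possible pairs
   (1 \<rhd> -, g \<rhd> -).  In each case \<nu> \<rhd> - and g\<nu> \<rhd> - are then forced: the coalgebra
   condition makes \<nu> \<rhd> g and (up to known terms) \<nu> \<rhd> \<nu> skew-primitive, which leaves at
   most two unknown coefficients, and a few instances of (1) and (2) determine them. *)

lemma sum_B: "(\<Sum>x\<in>UNIV. f x) = f One + f G + f N + f GN"
  by (simp add: UNIV_B add.assoc)

lemma B_fun_eq_iff:
  fixes f g :: "B \<Rightarrow> 'a"
  shows "f = g \<longleftrightarrow> f One = g One \<and> f G = g G \<and> f N = g N \<and> f GN = g GN"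
  unfolding fun_eq_iff by (metis B.exhaust)

lemma bas_apply [simp]: "bas a b = (if b = a then 1 else 0)"
  by (simp add: bas_def)

lemma vec_apply [simp]:
  "vec c1 cg cn cgn One = c1" "vec c1 cg cn cgn G = cg" "vec c1 cg cn cgn N = cn"
  "vec c1 cg cn cgn GN = cgn"
  by (simp_all add: vec_def)

lemma cop_apply: "cop u (p, q) =
  (case (p, q) of
     (One, One) \<Rightarrow> u One | (G, G) \<Rightarrow> u G | (G, N) \<Rightarrow> u N | (N, One) \<Rightarrow> u N
   | (One, GN) \<Rightarrow> u GN | (GN, G) \<Rightarrow> u GN | _ \<Rightarrow> 0)"
  by (cases p; cases q; simp add: cop_def sum_B)

lemma eps_apply: "eps u = u One + u G"
  by (simp add: eps_def sum_B)

lemma mult_apply: "mult u v =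
  vec (u One * v One + u G * v G) (u One * v G + u G * v One)
    (u One * v N + u N * v One + u G * v GN - u GN * v G)
    (u One * v GN + u GN * v One + u G * v N - u N * v G)"
  by (simp add: B_fun_eq_iff mult_def sum_B algebra_simps)

lemma mult_One_left [simp]: "mult (bas One) u = u"
  by (simp add: B_fun_eq_iff mult_apply)

lemma mult_One_right [simp]: "mult u (bas One) = u"
  by (simp add: B_fun_eq_iff mult_apply)

lemma cop_bas: "cop (bas a) = (bcop a :: 'k::comm_ring_1 h4t)"
  by (rule ext) (cases a; simp add: cop_def sum_B)

lemma eps_bas: "eps (bas a :: 'k::comm_ring_1 h4) = beps a"
  by (cases a; simp add: eps_apply)

lemma mult_bas: "mult (bas a) (bas b) = (bmul a b :: 'k::comm_ring_1 h4)"
  by (cases a; cases b; simp add: B_fun_eq_iff mult_apply)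

lemma rhd_bas: "rhd T (bas a) (bas b) = T a b"
  by (rule ext) (cases a; cases b; simp add: rhd_def sum_B)

lemma rhd_bas_left: "rhd T (bas a) v = (\<lambda>c. \<Sum>b\<in>UNIV. v b * T a b c)"
  by (rule ext) (cases a; simp add: rhd_def sum_B)

lemma rhd_bas_right: "rhd T u (bas b) = (\<lambda>c. \<Sum>a\<in>UNIV. u a * T a b c)"
  by (rule ext) (cases b; simp add: rhd_def sum_B)

lemma rhd_zero_right: "rhd T u 0 = 0"
  by (simp add: rhd_def fun_eq_iff)

lemmas coordinate_simps = B_fun_eq_iff sum_B mult_apply rhd_bas_left rhd_bas_right rhd_zero_right

definition tensor :: "'k::comm_ring_1 h4 \<Rightarrow> 'k h4 \<Rightarrow> 'k h4t" where
  "tensor u v = (\<lambda>(p, q). u p * v q)"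

definition grouplike :: "'k::comm_ring_1 h4 \<Rightarrow> bool" where
  "grouplike u \<longleftrightarrow> cop u = tensor u u \<and> eps u = 1"

definition skew_primitive :: "'k::comm_ring_1 h4 \<Rightarrow> 'k h4 \<Rightarrow> 'k h4 \<Rightarrow> bool"
  where
  "skew_primitive h h' u \<longleftrightarrow> cop u = tensor h u + tensor u h'"

lemma grouplike_cases:
  fixes u :: "'k::idom h4"
  assumes "grouplike u"
  shows "u = bas One \<or> u = bas G"
proof -
  have c: "cop u (p, q) = u p * u q" for p q
    using assms by (simp add: grouplike_def tensor_def)
  have "u N * u N = 0" "u GN * u GN = 0" "u One * u G = 0"
    using c[of N N] c[of GN GN] c[of One G] by (simp_all add: cop_apply)
  moreover have "u One + u G = 1"
    using assms by (simp add: grouplike_def eps_apply)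
  ultimately show ?thesis
    by (auto simp: B_fun_eq_iff)
qed

lemma skew_primitive_apply:
  "skew_primitive h h' u \<Longrightarrow> cop u (p, q) = h p * u q + u p * h' q"
  by (simp add: skew_primitive_def tensor_def)

lemma skew_primitive_One_One_eq_0:
  fixes u :: "'k::comm_ring_1 h4"
  assumes "skew_primitive (bas One) (bas One) u"
  shows "u = 0"
  using skew_primitive_apply[OF assms, of One One] skew_primitive_apply[OF assms, of G G]
    skew_primitive_apply[OF assms, of G N] skew_primitive_apply[OF assms, of GN G]
  by (simp add: cop_apply B_fun_eq_iff)

lemma skew_primitive_G_G_eq_0:
  fixes u :: "'k::comm_ring_1 h4"
  assumes "skew_primitive (bas G) (bas G) u"
  shows "u = 0"
  using skew_primitive_apply[OF assms, of One One] skew_primitive_apply[OF assms, of G G]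
    skew_primitive_apply[OF assms, of N One] skew_primitive_apply[OF assms, of One GN]
  by (simp add: cop_apply B_fun_eq_iff)

lemma skew_primitive_G_One_eq_vec:
  fixes u :: "'k::comm_ring_1 h4"
  assumes "skew_primitive (bas G) (bas One) u"
  shows "u = vec (u One) (- u One) (u N) 0"
  using skew_primitive_apply[OF assms, of G One] skew_primitive_apply[OF assms, of One GN]
  by (simp add: cop_apply B_fun_eq_iff eq_neg_iff_add_eq_0 add.commute)

lemma skew_primitive_One_G_eq_vec:
  fixes u :: "'k::comm_ring_1 h4"
  assumes "skew_primitive (bas One) (bas G) u"
  shows "u = vec (u One) (- u One) 0 (u GN)"
  using skew_primitive_apply[OF assms, of One G] skew_primitive_apply[OF assms, of G N]
  by (simp add: cop_apply B_fun_eq_iff eq_neg_iff_add_eq_0 add.commute)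

fun counit_map :: "B \<Rightarrow> 'k::comm_ring_1 h4" where
  "counit_map One = bas One"
| "counit_map G = bas One"
| "counit_map N = 0"
| "counit_map GN = 0"

fun scaling_map :: "'k::comm_ring_1 \<Rightarrow> B \<Rightarrow> 'k h4" where
  "scaling_map \<alpha> One = bas One"
| "scaling_map \<alpha> G = bas G"
| "scaling_map \<alpha> N = vec 0 0 \<alpha> 0"
| "scaling_map \<alpha> GN = vec 0 0 0 \<alpha>"

context
  fixes T :: "B \<Rightarrow> B \<Rightarrow> 'k::{idom, ring_char_0} h4"
  assumes rwph: "relaxed_weak_post_hopf T"
begin

lemma cop_T: "cop (T a c) (p, q) =
   (\<Sum>a1\<in>UNIV. \<Sum>a2\<in>UNIV. \<Sum>c1\<in>UNIV. \<Sum>c2\<in>UNIV.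
      bcop a (a1, a2) * bcop c (c1, c2) * T a1 c1 p * T a2 c2 q)"
  using fun_cong[OF rwph[unfolded relaxed_weak_post_hopf_def, THEN conjunct1, rule_format,
        of "bas a" "bas c"], of "(p, q)"]
  unfolding rhd_bas cop_bas by simp

lemma eps_T: "eps (T a c) = beps a * beps c"
  using rwph[unfolded relaxed_weak_post_hopf_def, THEN conjunct2, THEN conjunct1, rule_format,
      of "bas a" "bas c"]
  unfolding rhd_bas eps_bas .

lemma T_mult: "rhd T (bas a) (bmul b c) r =
   (\<Sum>a1\<in>UNIV. \<Sum>a2\<in>UNIV. bcop a (a1, a2) * mult (T a1 b) (T a2 c) r)"
  using fun_cong[OF rwph[unfolded relaxed_weak_post_hopf_def, THEN conjunct2, THEN conjunct2,
        THEN conjunct1, rule_format, of "bas a" "bas b" "bas c"], of r]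
  unfolding rhd_bas cop_bas mult_bas .

lemma T_assoc: "rhd T (bas a) (T b c) r =
   (\<Sum>a1\<in>UNIV. \<Sum>a2\<in>UNIV.
      bcop a (a1, a2) * rhd T (mult (bas a1) (T a2 b)) (bas c) r)"
  using fun_cong[OF rwph[unfolded relaxed_weak_post_hopf_def, THEN conjunct2, THEN conjunct2,
        THEN conjunct2, rule_format, of "bas a" "bas b" "bas c"], of r]
  unfolding rhd_bas cop_bas .

lemma grouplike_action_cop:
  assumes "a = One \<or> a = G"
  shows "cop (T a c) (p, q) =
    (\<Sum>c1\<in>UNIV. \<Sum>c2\<in>UNIV. bcop c (c1, c2) * T a c1 p * T a c2 q)"
  using assms by (auto simp: cop_T sum_B)

lemma grouplike_action_mult:
  assumes "a = One \<or> a = G"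
  shows "rhd T (bas a) (bmul b c) = mult (T a b) (T a c)"
  using assms by (auto simp: fun_eq_iff T_mult sum_B)

lemma grouplike_action_assoc:
  assumes "a = One \<or> a = G"
  shows "rhd T (bas a) (T b c) = rhd T (mult (bas a) (T a b)) (bas c)"
  using assms by (auto simp: fun_eq_iff T_assoc sum_B)

lemma grouplike_action_cases:
  assumes "a = One \<or> a = G"
  shows "T a = counit_map \<or> (\<exists>\<alpha>. T a = scaling_map \<alpha>)"
proof -
  have "grouplike (T a G)"
    using grouplike_action_cop[OF assms] eps_T[of a G] assms
    by (auto simp: grouplike_def tensor_def sum_B)
  have skew: "skew_primitive (T a G) (T a One) (T a N)"
    using grouplike_action_cop[OF assms] by (auto simp: skew_primitive_def tensor_def sum_B)
  have products: "T a One = mult (T a G) (T a G)" "T a GN = mult (T a G) (T a N)"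
      "mult (T a N) (T a N) = 0"
    using grouplike_action_mult[OF assms, of G G] grouplike_action_mult[OF assms, of G N]
      grouplike_action_mult[OF assms, of N N] by (simp_all add: rhd_bas rhd_zero_right)
  from grouplike_cases[OF \<open>grouplike (T a G)\<close>] show ?thesis
  proof
    assume "T a G = bas One"
    then have "T a N = 0"
      using skew products by (intro skew_primitive_One_One_eq_0) simp
    with \<open>T a G = bas One\<close> products have "T a = counit_map"
      by (simp add: B_fun_eq_iff mult_apply)
    then show ?thesis ..
  next
    assume "T a G = bas G"
    then have "T a N = vec (T a N One) (- T a N One) (T a N N) 0"
      using skew products by (intro skew_primitive_G_One_eq_vec) (simp add: mult_bas)
    moreover have "T a N One = 0"
    proof -
      (* (\<beta>(1 - g) + \<alpha>\<nu>)^2 = 2\<beta>^2(1 - g): this is where characteristic \<noteq> 2 is needed *)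
      have "2 * (T a N One * T a N One) = 0"
        using fun_cong[OF products(3), of One] fun_cong[OF calculation, of G] by (simp add: mult_apply)
      then show ?thesis
        by simp
    qed
    ultimately have "T a = scaling_map (T a N N)"
      using \<open>T a G = bas G\<close> products by (simp add: B_fun_eq_iff mult_apply mult_bas)
    then show ?thesis
      by blast
  qed
qed

lemma actions_One_G_cases:
  obtains (i) "T One = scaling_map 1" "T G = scaling_map (-1)"
  | (ii) "T One = scaling_map 1" "T G = counit_map"
  | (iii) "T One = scaling_map 1" "T G = scaling_map 1"
  | (iv) "T One = scaling_map 0" "T G = scaling_map 0"
  | (v) "T One = scaling_map 0" "T G = counit_map"
  | (vi) "T One = counit_map" "T G = counit_map"
proof -
  have scaling_idem: "\<alpha> * \<alpha> = \<alpha>" if "T One = scaling_map \<alpha>" for \<alpha>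
    using grouplike_action_assoc[of One One N]
    by (simp add: that coordinate_simps)
  consider (counit) "T One = counit_map" | (scaling) \<alpha> where "T One = scaling_map \<alpha>"
    using grouplike_action_cases by blast
  then show ?thesis
  proof cases
    case counit
    have "T G \<noteq> scaling_map \<beta>" for \<beta>
    proof
      assume scaling_G: "T G = scaling_map \<beta>"
      show False
        using grouplike_action_assoc[of G One G]
        by (simp add: counit scaling_G coordinate_simps)
    qed
    then show ?thesis
      using grouplike_action_cases[of G] counit vi by blast
  next
    case (scaling \<alpha>)
    then have "\<alpha> = 0 \<or> \<alpha> = 1"
      using scaling_idem by auto
    consider "T G = counit_map" | \<beta> where "T G = scaling_map \<beta>"
      using grouplike_action_cases by blast
    then show ?thesis
    proof cases
      case 1
      then show ?thesis
        using \<open>\<alpha> = 0 \<or> \<alpha> = 1\<close> scaling ii v by blast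
    next
      case (2 \<beta>)
      have "\<beta> * \<beta> = \<alpha>" "\<alpha> * \<beta> = \<beta>"
        using grouplike_action_assoc[of G G N] grouplike_action_assoc[of One G N]
        by (simp_all add: scaling 2 coordinate_simps)
      with \<open>\<alpha> = 0 \<or> \<alpha> = 1\<close> show ?thesis
        using scaling 2 i iii iv by (auto simp: square_eq_1_iff)
    qed
  qed
qed

lemma actions_One_G_at_One: "T One One = bas One" "T G One = bas One"
  using grouplike_action_cases[of One] grouplike_action_cases[of G] by auto

lemma actions_N_GN_at_One: "T N One = 0" "T GN One = 0"
proof -
  have "T N One = T N One + T N One" "T GN One = T GN One + T GN One"
    using T_mult[of N One One] T_mult[of GN One One]
    by (simp_all add: actions_One_G_at_One rhd_bas sum_B fun_eq_iff)
  then show "T N One = 0" "T GN One = 0"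
    by simp_all
qed

lemma actions_N_GN_at_GN:
  "T N GN = mult (T G G) (T N N) + mult (T N G) (T One N)"
  "T GN GN = mult (T One G) (T GN N) + mult (T GN G) (T G N)"
  using T_mult[of N G N] T_mult[of GN G N] by (simp_all add: rhd_bas sum_B fun_eq_iff)

lemma action_N_at_G_anticommute: "mult (T G G) (T N G) + mult (T N G) (T One G) = 0"
  using T_mult[of N G G] by (simp add: rhd_bas sum_B fun_eq_iff actions_N_GN_at_One)

lemma actions_N_GN_cop:
  "skew_primitive (T G G) (T One G) (T N G)"
  "skew_primitive (T One G) (T G G) (T GN G)"
  "cop (T N N) = tensor (T G G) (T N N) + tensor (T N G) (T One N) + tensor (T N N) (bas One)"
  "cop (T GN N) = tensor (T One G) (T GN N) + tensor (T GN G) (T G N) + tensor (T GN N) (bas One)"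
  using cop_T[of N G] cop_T[of GN G] cop_T[of N N] cop_T[of GN N]
  by (simp_all add: skew_primitive_def tensor_def sum_B fun_eq_iff actions_One_G_at_One
      actions_N_GN_at_One)

lemma action_N_assoc:
  "rhd T (bas N) (T b c) =
    rhd T (mult (bas G) (T N b)) (bas c) + rhd T (mult (bas N) (T One b)) (bas c)"
  using T_assoc[of N b c] by (simp add: sum_B fun_eq_iff)

lemma actions_N_GN_counit_G:
  assumes "T One = scaling_map \<alpha>" "T G = counit_map"
  obtains \<beta> where "T GN = T N" "T N One = 0" "T N G = vec \<beta> (- \<beta>) 0 0"
    "T N N = vec 0 0 (- \<alpha> * \<beta>) 0" "T N GN = vec 0 0 0 (- \<alpha> * \<beta>)"
proof -
  have "T N G = vec (T N G One) (- T N G One) 0 (T N G GN)"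
    using actions_N_GN_cop(1) by (intro skew_primitive_One_G_eq_vec) (simp add: assms)
  moreover have "T N G GN = 0"
    using fun_cong[OF action_N_at_G_anticommute, of GN] fun_cong[OF calculation, of N]
    by (simp add: assms mult_apply)
  ultimately obtain \<beta> where \<beta>: "T N G = vec \<beta> (- \<beta>) 0 0"
    by auto
  have "T GN G = vec \<beta> (- \<beta>) 0 0"
    using action_N_assoc[of G G]
    by (auto simp: assms \<beta> actions_N_GN_at_One coordinate_simps)
  have "T GN N = vec 0 0 (- \<alpha> * \<beta>) 0"
    using action_N_assoc[of G N]
    by (auto simp: assms \<beta> coordinate_simps mult.commute)
  have "cop (T N N) (p, q) = bas One p * T N N q + T N G p * T One N q + T N N p * bas One q"
    for p q
    using fun_cong[OF actions_N_GN_cop(3), of "(p, q)"] by (simp add: assms tensor_def)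
  from this[of One One] this[of G G] this[of G N] this[of GN G]
  have "T N N = vec 0 0 (- \<alpha> * \<beta>) 0"
    by (simp add: assms \<beta> cop_apply B_fun_eq_iff)
  then show ?thesis
    using that actions_N_GN_at_GN
    by (simp add: assms \<beta> \<open>T GN G = _\<close> \<open>T GN N = _\<close> actions_N_GN_at_One coordinate_simps
        algebra_simps)
qed

lemma eq_form_i:
  assumes "T One = scaling_map 1" "T G = scaling_map (-1)"
  shows "\<exists>a. T = form_i a"
proof -
  have "T N G = 0" "T GN G = 0"
    using actions_N_GN_cop(1,2) by (auto simp: assms intro: skew_primitive_G_G_eq_0)
  have "T GN N = T N N"
    using action_N_assoc[of G N]
    by (simp add: assms \<open>T N G = 0\<close> coordinate_simps)
  moreover have "T GN N = - rhd T (bas G) (T N N)"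
    using grouplike_action_assoc[of G N N]
    by (simp add: assms coordinate_simps)
  ultimately have "T N N One = 0" "T N N G = 0"
    by (simp_all add: assms coordinate_simps)
  moreover have "skew_primitive (bas G) (bas One) (T N N)"
    using actions_N_GN_cop(3)
    by (simp add: assms \<open>T N G = 0\<close> skew_primitive_def tensor_def fun_eq_iff)
  ultimately obtain \<alpha> where \<alpha>: "T N N = vec 0 0 \<alpha> 0"
    using skew_primitive_G_One_eq_vec by fastforce
  then have "T = form_i \<alpha>"
    using actions_N_GN_at_GN
    by (simp add: assms actions_N_GN_at_One \<open>T GN N = T N N\<close> \<open>T N G = 0\<close> \<open>T GN G = 0\<close>
        coordinate_simps)
  then show ?thesis ..
qed

lemma eq_form_ii:
  assumes "T One = scaling_map 1" "T G = counit_map"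
  shows "\<exists>a. T = form_ii a"
proof -
  obtain \<beta> where "T GN = T N" "T N One = 0" "T N G = vec \<beta> (- \<beta>) 0 0"
    "T N N = vec 0 0 (- \<beta>) 0" "T N GN = vec 0 0 0 (- \<beta>)"
    using actions_N_GN_counit_G[OF assms] by auto
  then have "T = form_ii \<beta>"
    by (simp add: assms B_fun_eq_iff)
  then show ?thesis ..
qed

lemma eq_form_iii:
  assumes "T One = scaling_map 1" "T G = scaling_map 1"
  shows "T = form_iii"
proof -
  have "T N G = 0"
    using actions_N_GN_cop(1) by (intro skew_primitive_G_G_eq_0) (simp add: assms)
  have "T GN z = T N z" for z
    using grouplike_action_assoc[of G N z]
    by (simp add: assms coordinate_simps)
  moreover have "T N z = - T GN z" for z
    using action_N_assoc[of G z]
    by (cases z) (simp_all add: assms \<open>T N G = 0\<close> coordinate_simps)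
  ultimately have "T N z = 0" "T GN z = 0" for z
    by (simp_all add: B_fun_eq_iff eq_neg_iff_add_eq_0)
  then show ?thesis
    by (simp add: assms B_fun_eq_iff)
qed

lemma eq_form_iv:
  assumes "T One = scaling_map 0" "T G = scaling_map 0"
  shows "T = form_iv"
proof -
  have "T N G = 0" "T GN G = 0"
    using actions_N_GN_cop(1,2) by (auto simp: assms intro: skew_primitive_G_G_eq_0)
  have "T N N One = 0" "T N N G = 0"
    using grouplike_action_assoc[of One N N]
    by (simp_all add: assms coordinate_simps)
  moreover have "skew_primitive (bas G) (bas One) (T N N)"
    using actions_N_GN_cop(3)
    by (simp add: assms \<open>T N G = 0\<close> skew_primitive_def tensor_def fun_eq_iff)
  ultimately obtain \<alpha> where \<alpha>: "T N N = vec 0 0 \<alpha> 0"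
    using skew_primitive_G_One_eq_vec by fastforce
  have "T GN N = 0"
    using action_N_assoc[of G N]
    by (simp add: assms \<open>T N G = 0\<close> coordinate_simps)
  have "\<alpha> * \<alpha> = 0"
    using fun_cong[OF action_N_assoc[of N N], of N]
    by (simp add: assms \<alpha> \<open>T GN N = 0\<close> coordinate_simps)
  then show ?thesis
    using actions_N_GN_at_GN
    by (simp add: assms \<alpha> actions_N_GN_at_One \<open>T GN N = 0\<close> \<open>T N G = 0\<close> \<open>T GN G = 0\<close>
        coordinate_simps)
qed

lemma eq_form_v:
  assumes "T One = scaling_map 0" "T G = counit_map"
  shows "T = form_v"
proof -
  obtain \<beta> where \<beta>: "T GN = T N" "T N One = 0" "T N G = vec \<beta> (- \<beta>) 0 0"
    "T N N = vec 0 0 (- 0 * \<beta>) 0" "T N GN = vec 0 0 0 (- 0 * \<beta>)"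
    using actions_N_GN_counit_G[OF assms] .
  moreover have "\<beta> = 0"
    using fun_cong[OF grouplike_action_assoc[of One N G], of One]
    by (simp add: assms \<beta> coordinate_simps)
  ultimately show ?thesis
    by (simp add: assms B_fun_eq_iff)
qed

lemma eq_form_vi:
  assumes "T One = counit_map" "T G = counit_map"
  shows "T = form_vi"
proof -
  have "T N G = 0" "T GN G = 0"
    using actions_N_GN_cop(1,2) by (auto simp: assms intro: skew_primitive_One_One_eq_0)
  then have "skew_primitive (bas One) (bas One) (T N N)"
    "skew_primitive (bas One) (bas One) (T GN N)"
    using actions_N_GN_cop(3,4) by (simp_all add: assms skew_primitive_def tensor_def fun_eq_iff)
  then have "T N N = 0" "T GN N = 0"
    by (simp_all add: skew_primitive_One_One_eq_0)
  then show ?thesis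
    using actions_N_GN_at_GN
    by (simp add: assms \<open>T N G = 0\<close> \<open>T GN G = 0\<close> actions_N_GN_at_One coordinate_simps)
qed

end

theorem theorem1:
  fixes T :: "B \<Rightarrow> B \<Rightarrow> 'k::{alg_closed_field, field_char_0} h4"
  assumes "relaxed_weak_post_hopf T"
  shows "(\<exists>a. T = form_i a) \<or> (\<exists>a. T = form_ii a) \<or> T = form_iii \<or>
         T = form_iv \<or> T = form_v \<or> T = form_vi"
  using assms
proof (cases rule: actions_One_G_cases)
  case i
  with eq_form_i[OF assms] show ?thesis by blast
next
  case ii
  with eq_form_ii[OF assms] show ?thesis by blast
next
  case iii
  with eq_form_iii[OF assms] show ?thesis by blast
next
  case iv
  with eq_form_iv[OF assms] show ?thesis by blast
next
  case v
  with eq_form_v[OF assms] show ?thesis by blast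
next
  case vi
  with eq_form_vi[OF assms] show ?thesis by blast
qed

end
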